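(* Let $K\geq 1$ be an integer and let $A$ be a real $m\times n$ matrix (with $K+1\leq n$) whose restricted isometry constant of order $K+1$ satisfies $\delta_{K+1}=\frac{1}{\sqrt{K}+1}$. Then the OMP algorithm perfectly recovers every $K$-sparse signal $x\in\mathbb{R}^n$ from $y=Ax$ in $K$ iterations.
   Context: A vector $x\in\mathbb{R}^n$ is $k$-sparse if $|\mathrm{supp}(x)|\leq k$, where $\mathrm{supp}(x)=\{i: x_i\neq 0\}$. For an $m\times n$ real matrix $A$ and an integer $1\leq k\leq n$, the restricted isometry constant $\delta_k$ is the smallest constant such that $(1-\delta_k)\|x\|_2^2\leq\|Ax\|_2^2\leq(1+\delta_k)\|x\|_2^2$ for all $k$-sparse $x\in\mathbb{R}^n$. For $T\subseteq\{1,\dots,n\}$, $A_T$ denotes the submatrix of $A$ consisting of the columns indexed by $T$, and $A_j$ denotes the $j$-th column of $A$. The OMP (orthogonal matching pursuit) algorithm with input $y$, $A$ and sparsity $K$: set $k=0$, $r^0=y$, $T^0=\emptyset$; while $k<K$: $k\leftarrow k+1$; $t^k=\arg\max_j|\langle r^{k-1},A_j\rangle|$; $T^k=T^{k-1}\cup\{t^k\}$; $\hat x_{T^k}=\arg\min_{z}\|y-A_{T^k}z\|_2$; $r^k=y-A_{T^k}\hat x_{T^k}$. Output $\hat x=\arg\min_{z:\,\mathrm{supp}(z)=T^K}\|y-Az\|_2$. Perfect recovery in $K$ iterations means that in each of the $K$ iterations OMP selects an index of $\mathrm{supp}(x)$ and the output satisfies $\hat x=x$. *)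

theory Defs
  imports "HOL-Analysis.Analysis"
begin

text \<open>Signals are vectors in R^n (index type 'n), matrices are real^'n^'m (m rows, n columns).\<close>

definition supp :: "real^'n \<Rightarrow> 'n set" where
  "supp x = {i. x $ i \<noteq> 0}"

definition sparse :: "nat \<Rightarrow> real^'n \<Rightarrow> bool" where
  "sparse k x \<longleftrightarrow> card (supp x) \<le> k"

definition RIC :: "real^'n^'m \<Rightarrow> nat \<Rightarrow> real" where
  "RIC A k = Inf {\<delta>. \<forall>x. sparse k x \<longrightarrow>
      (1 - \<delta>) * (norm x)\<^sup>2 \<le> (norm (A *v x))\<^sup>2 \<and>
      (norm (A *v x))\<^sup>2 \<le> (1 + \<delta>) * (norm x)\<^sup>2}"

definition ls_min :: "real^'n^'m \<Rightarrow> real^'m \<Rightarrow> 'n set \<Rightarrow> real^'n \<Rightarrow> bool" where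
  "ls_min A y T z \<longleftrightarrow> supp z \<subseteq> T \<and>
     (\<forall>w. supp w \<subseteq> T \<longrightarrow> norm (y - A *v z) \<le> norm (y - A *v w))"

text \<open>OMP residual after selecting the index set T (independent of the chosen minimizer).\<close>
definition omp_residual :: "real^'n^'m \<Rightarrow> real^'m \<Rightarrow> 'n set \<Rightarrow> real^'m" where
  "omp_residual A y T = y - A *v (SOME z. ls_min A y T z)"

text \<open>t is a valid run of OMP with K iterations: t k is the index selected in iteration k
  (k = 1..K), any maximizer of the correlation with the current residual (arbitrary tie-breaking).\<close>
definition omp_run :: "real^'n^'m \<Rightarrow> real^'m \<Rightarrow> nat \<Rightarrow> (nat \<Rightarrow> 'n) \<Rightarrow> bool" where
  "omp_run A y K t \<longleftrightarrow> (\<forall>k \<in> {1..K}. \<forall>j.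
      \<bar>omp_residual A y (t ` {1..<k}) \<bullet> column j A\<bar>
        \<le> \<bar>omp_residual A y (t ` {1..<k}) \<bullet> column (t k) A\<bar>)"

end

theory Submission
  imports Defs
begin

text \<open>
  OMP can go wrong only if some residual \<open>r = A u\<close>, with \<open>u\<close> supported on the support \<open>S\<close> of
  \<open>x\<close>, correlates with a column \<open>A\<^sub>i\<close>, \<open>i \<notin> S\<close>, at least as strongly as with every column
  indexed by \<open>S\<close>. Expanding \<open>\<parallel>A (u + t e\<^sub>i)\<parallel>\<^sup>2\<close> under the RIP of order \<open>K + 1\<close> gives
  \<open>\<bar>\<langle>r, A\<^sub>i\<rangle>\<bar> \<le> \<delta> \<parallel>u\<parallel>\<close>, and summing the correlations over \<open>S\<close> gives
  \<open>\<parallel>A u\<parallel>\<^sup>2 \<le> \<surd>K \<bar>\<langle>r, A\<^sub>i\<rangle>\<bar> \<parallel>u\<parallel> \<le> \<delta> \<surd>K \<parallel>u\<parallel>\<^sup>2 = (1 - \<delta>) \<parallel>u\<parallel>\<^sup>2\<close>. So the lower RIP bound is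
  attained, and then perturbing \<open>u\<close> along \<open>e\<^sub>i\<close> forces \<open>\<langle>r, A\<^sub>i\<rangle> = 0\<close>, hence \<open>A u = 0\<close>.
  Together with the normal equations (an index chosen before has zero correlation), every step
  with a nonzero residual picks a new index of \<open>S\<close>; after \<open>K\<close> steps \<open>S\<close> is found, and
  injectivity of \<open>A\<close> on \<open>(K + 1)\<close>-sparse vectors returns \<open>x\<close>.
\<close>

lemma linear_le_square_imp_eq_0:
  fixes p c :: real
  assumes "\<And>t. t * p \<le> c * t\<^sup>2"
  shows "p = 0"
proof (rule ccontr)
  assume "p \<noteq> 0"
  define t where "t = p / (\<bar>c\<bar> + 1)"
  have p: "p = (\<bar>c\<bar> + 1) * t"
    by (simp add: t_def add_pos_nonneg)
  have "(\<bar>c\<bar> + 1)\<^sup>2 * (t * p) \<le> (\<bar>c\<bar> + 1)\<^sup>2 * (c * t\<^sup>2)"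
    using assms[of t] by (simp add: mult_left_mono)
  then have "(\<bar>c\<bar> + 1) * p\<^sup>2 \<le> c * p\<^sup>2"
    by (simp add: p power2_eq_square algebra_simps)
  moreover have "c * p\<^sup>2 < (\<bar>c\<bar> + 1) * p\<^sup>2"
    using \<open>p \<noteq> 0\<close> by (intro mult_strict_right_mono) auto
  ultimately show False by linarith
qed

lemma power2_norm_add_scaleR:
  fixes a b :: "'a::real_inner"
  shows "(norm (a + t *\<^sub>R b))\<^sup>2 = (norm a)\<^sup>2 + 2 * t * (a \<bullet> b) + t\<^sup>2 * (norm b)\<^sup>2"
  unfolding power2_norm_eq_inner
  by (simp add: inner_add_left inner_add_right inner_commute algebra_simps power2_eq_square)

lemma inner_eq_0_if_norm_le_norm_add_scaleR:
  fixes r v :: "'a::real_inner"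
  assumes "\<And>t. norm r \<le> norm (r + t *\<^sub>R v)"
  shows "r \<bullet> v = 0"
proof -
  have "t * (-2 * (r \<bullet> v)) \<le> (norm v)\<^sup>2 * t\<^sup>2" for t
  proof -
    have "(norm r)\<^sup>2 \<le> (norm (r + t *\<^sub>R v))\<^sup>2"
      using assms[of t] by (simp add: power_mono)
    then show ?thesis by (simp add: power2_norm_add_scaleR algebra_simps)
  qed
  then have "-2 * (r \<bullet> v) = 0"
    by (rule linear_le_square_imp_eq_0)
  then show ?thesis by simp
qed

lemma supp_diff: "supp (u - v) \<subseteq> supp u \<union> supp v"
  unfolding supp_def by auto

lemma supp_add_axis: "supp (u + t *\<^sub>R axis i 1) \<subseteq> insert i (supp u)"
  unfolding supp_def by (auto simp: axis_def)

lemma sparse_add_axis: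
  assumes "sparse k u"
  shows "sparse (Suc k) (u + t *\<^sub>R axis i 1)"
proof -
  have "card (supp (u + t *\<^sub>R axis i 1)) \<le> card (insert i (supp u))"
    by (intro card_mono supp_add_axis) simp
  also have "\<dots> \<le> Suc k"
    using assms by (simp add: sparse_def card_insert_if)
  finally show ?thesis by (simp add: sparse_def)
qed

lemma matrix_vector_add_axis:
  fixes A :: "real^'n^'m"
  shows "A *v (u + t *\<^sub>R axis i 1) = A *v u + t *\<^sub>R column i A"
  by (simp add: matrix_vector_right_distrib matrix_vector_mult_scaleR matrix_vector_mult_basis)

lemma power2_norm_add_axis:
  fixes u :: "real^'n"
  assumes "u $ i = 0"
  shows "(norm (u + t *\<^sub>R axis i 1))\<^sup>2 = (norm u)\<^sup>2 + t\<^sup>2"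
  using assms by (simp add: power2_norm_add_scaleR inner_axis)

lemma power2_norm_matrix_vector:
  fixes A :: "real^'n^'m"
  shows "(norm (A *v u))\<^sup>2 = (\<Sum>j\<in>supp u. u $ j * ((A *v u) \<bullet> column j A))"
proof -
  have "(norm (A *v u))\<^sup>2 = (A *v u) \<bullet> (A *v u)"
    by (simp add: power2_norm_eq_inner)
  also have "\<dots> = (A *v u) \<bullet> (\<Sum>j\<in>UNIV. u $ j *\<^sub>R column j A)"
    by (subst (2) matrix_mult_sum) (simp add: scalar_mult_eq_scaleR)
  also have "\<dots> = (\<Sum>j\<in>UNIV. u $ j * ((A *v u) \<bullet> column j A))"
    by (simp add: inner_sum_right)
  also have "\<dots> = (\<Sum>j\<in>supp u. u $ j * ((A *v u) \<bullet> column j A))"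
    by (intro sum.mono_neutral_right) (auto simp: supp_def)
  finally show ?thesis .
qed

lemma matrix_vector_eq_0_if_orthogonal_columns:
  fixes A :: "real^'n^'m"
  assumes "\<And>j. (A *v u) \<bullet> column j A = 0"
  shows "A *v u = 0"
  using power2_norm_matrix_vector[of A u] assms by simp

lemma sum_abs_le_sqrt_card_norm:
  fixes u :: "real^'n"
  shows "(\<Sum>j\<in>supp u. \<bar>u $ j\<bar>) \<le> sqrt (card (supp u)) * norm u"
proof -
  have "(\<Sum>j\<in>supp u. \<bar>u $ j\<bar> * \<bar>1::real\<bar>) \<le> L2_set (\<lambda>j. u $ j) (supp u) * L2_set (\<lambda>j. 1) (supp u)"
    by (rule L2_set_mult_ineq)
  moreover have "L2_set (\<lambda>j. u $ j) (supp u) = norm u"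
  proof -
    have "(\<Sum>j\<in>supp u. (u $ j)\<^sup>2) = (\<Sum>j\<in>UNIV. (u $ j)\<^sup>2)"
      by (intro sum.mono_neutral_left) (auto simp: supp_def)
    then show ?thesis by (simp add: L2_set_def norm_vec_def)
  qed
  ultimately show ?thesis by (simp add: L2_set_def mult.commute)
qed

lemma power2_norm_matrix_vector_le:
  fixes A :: "real^'n^'m"
  assumes "sparse K u" and "\<forall>j\<in>supp u. \<bar>(A *v u) \<bullet> column j A\<bar> \<le> P"
  shows "(norm (A *v u))\<^sup>2 \<le> P * sqrt K * norm u"
proof (cases "u = 0")
  case False
  then obtain j where "j \<in> supp u" by (auto simp: supp_def vec_eq_iff)
  then have "0 \<le> P" using assms(2) by force
  have "(norm (A *v u))\<^sup>2 \<le> (\<Sum>j\<in>supp u. \<bar>u $ j\<bar> * P)"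
    unfolding power2_norm_matrix_vector
  proof (rule sum_mono)
    fix j assume "j \<in> supp u"
    have "u $ j * ((A *v u) \<bullet> column j A) \<le> \<bar>u $ j\<bar> * \<bar>(A *v u) \<bullet> column j A\<bar>"
      by (metis abs_ge_self abs_mult)
    also have "\<dots> \<le> \<bar>u $ j\<bar> * P"
      using assms(2) \<open>j \<in> supp u\<close> by (simp add: mult_left_mono)
    finally show "u $ j * ((A *v u) \<bullet> column j A) \<le> \<bar>u $ j\<bar> * P" .
  qed
  also have "\<dots> = P * (\<Sum>j\<in>supp u. \<bar>u $ j\<bar>)"
    by (simp add: sum_distrib_left mult.commute)
  also have "\<dots> \<le> P * (sqrt (card (supp u)) * norm u)"
    using \<open>0 \<le> P\<close> by (intro mult_left_mono sum_abs_le_sqrt_card_norm)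
  also have "\<dots> \<le> P * (sqrt K * norm u)"
    using \<open>0 \<le> P\<close> assms(1) by (intro mult_left_mono mult_right_mono) (auto simp: sparse_def)
  finally show ?thesis by (simp add: mult.assoc)
qed simp

section \<open>The restricted isometry property\<close>

definition rip :: "real^'n^'m \<Rightarrow> nat \<Rightarrow> real \<Rightarrow> bool" where
  "rip A k \<delta> \<longleftrightarrow> (\<forall>v. sparse k v \<longrightarrow>
     (1 - \<delta>) * (norm v)\<^sup>2 \<le> (norm (A *v v))\<^sup>2 \<and> (norm (A *v v))\<^sup>2 \<le> (1 + \<delta>) * (norm v)\<^sup>2)"

lemma rip_exists:
  fixes A :: "real^'n^'m"
  shows "\<exists>\<delta>. rip A k \<delta>"
proof -
  obtain B where B: "\<And>v. norm (A *v v) \<le> norm v * B"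
    using bounded_linear.bounded[OF matrix_vector_mul_bounded_linear] by blast
  have "rip A k (B\<^sup>2 + 1)"
    unfolding rip_def
  proof (intro allI impI conjI)
    fix v :: "real^'n"
    have "(1 - (B\<^sup>2 + 1)) * (norm v)\<^sup>2 \<le> 0" by simp
    then show "(1 - (B\<^sup>2 + 1)) * (norm v)\<^sup>2 \<le> (norm (A *v v))\<^sup>2"
      by (meson order_trans zero_le_power2)
    have "(norm (A *v v))\<^sup>2 \<le> (norm v * B)\<^sup>2"
      using B[of v] by (simp add: power_mono)
    also have "\<dots> = B\<^sup>2 * (norm v)\<^sup>2"
      by (simp add: power_mult_distrib)
    also have "\<dots> \<le> (1 + (B\<^sup>2 + 1)) * (norm v)\<^sup>2"
      by (rule mult_right_mono) simp_all
    finally show "(norm (A *v v))\<^sup>2 \<le> (1 + (B\<^sup>2 + 1)) * (norm v)\<^sup>2" .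
  qed
  then show ?thesis ..
qed

lemma rip_RIC:
  fixes A :: "real^'n^'m"
  shows "rip A k (RIC A k)"
  unfolding rip_def
proof (intro allI impI)
  fix v :: "real^'n"
  assume v: "sparse k v"
  have RIC: "RIC A k = Inf {\<delta>. rip A k \<delta>}"
    by (simp add: RIC_def rip_def)
  show "(1 - RIC A k) * (norm v)\<^sup>2 \<le> (norm (A *v v))\<^sup>2 \<and>
        (norm (A *v v))\<^sup>2 \<le> (1 + RIC A k) * (norm v)\<^sup>2"
  proof (cases "v = 0")
    case False
    define q where "q = (norm (A *v v))\<^sup>2 / (norm v)\<^sup>2"
    have n: "(norm v)\<^sup>2 > 0" using False by simp
    have "\<bar>q - 1\<bar> \<le> \<delta>" if "rip A k \<delta>" for \<delta>
    proof -
      have "(1 - \<delta>) * (norm v)\<^sup>2 \<le> (norm (A *v v))\<^sup>2" "(norm (A *v v))\<^sup>2 \<le> (1 + \<delta>) * (norm v)\<^sup>2"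
        using that v by (auto simp: rip_def)
      then have "1 - \<delta> \<le> q" "q \<le> 1 + \<delta>"
        using n by (simp_all add: q_def pos_le_divide_eq pos_divide_le_eq)
      then show ?thesis by (simp add: abs_le_iff)
    qed
    then have "\<bar>q - 1\<bar> \<le> RIC A k"
      unfolding RIC using rip_exists by (intro cInf_greatest) auto
    then have "1 - RIC A k \<le> q" "q \<le> 1 + RIC A k"
      by (simp_all add: abs_le_iff)
    then show ?thesis
      using n by (simp add: q_def pos_le_divide_eq pos_divide_le_eq)
  qed simp
qed

lemma rip_matrix_vector_inj:
  fixes A :: "real^'n^'m"
  assumes "rip A k \<delta>" "\<delta> < 1" "supp x \<union> supp z \<subseteq> U" "card U \<le> k" "A *v x = A *v z"
  shows "x = z"
proof -
  have "card (supp (x - z)) \<le> k"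
    using supp_diff[of x z] assms(3,4) by (meson card_mono finite order_trans)
  then have "(1 - \<delta>) * (norm (x - z))\<^sup>2 \<le> (norm (A *v (x - z)))\<^sup>2"
    using assms(1) by (simp add: rip_def sparse_def)
  also have "\<dots> = 0"
    using assms(5) by (simp add: matrix_vector_mult_diff_distrib)
  finally have "(norm (x - z))\<^sup>2 \<le> 0"
    using assms(2) by (simp add: mult_le_0_iff)
  then show ?thesis by simp
qed

lemma rip_add_axis:
  fixes A :: "real^'n^'m"
  assumes "rip A (Suc K) \<delta>" "sparse K u" "u $ i = 0"
  shows "(1 - \<delta>) * ((norm u)\<^sup>2 + t\<^sup>2)
           \<le> (norm (A *v u))\<^sup>2 + 2 * t * ((A *v u) \<bullet> column i A) + t\<^sup>2 * (norm (column i A))\<^sup>2"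
      (is ?lower)
    and "(norm (A *v u))\<^sup>2 + 2 * t * ((A *v u) \<bullet> column i A) + t\<^sup>2 * (norm (column i A))\<^sup>2
           \<le> (1 + \<delta>) * ((norm u)\<^sup>2 + t\<^sup>2)"
      (is ?upper)
proof -
  have "sparse (Suc K) (u + t *\<^sub>R axis i 1)"
    by (rule sparse_add_axis[OF assms(2)])
  moreover have "(norm (A *v (u + t *\<^sub>R axis i 1)))\<^sup>2
      = (norm (A *v u))\<^sup>2 + 2 * t * ((A *v u) \<bullet> column i A) + t\<^sup>2 * (norm (column i A))\<^sup>2"
    by (simp add: matrix_vector_add_axis power2_norm_add_scaleR)
  ultimately show ?lower ?upper
    using assms(1) power2_norm_add_axis[OF assms(3)] unfolding rip_def by metis+
qed

lemma rip_column_correlation_le: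
  fixes A :: "real^'n^'m"
  assumes "rip A (Suc K) \<delta>" "sparse K u" "u $ i = 0"
  shows "\<bar>(A *v u) \<bullet> column i A\<bar> \<le> \<delta> * norm u"
proof -
  define N where "N = norm u"
  define p where "p = (A *v u) \<bullet> column i A"
  note bounds = rip_add_axis[OF assms, folded N_def p_def]
  have upper: "N * p \<le> N * (\<delta> * N)"
    using bounds(2)[of N] bounds(1)[of "-N"] by (simp add: power2_eq_square algebra_simps)
  have lower: "N * (- p) \<le> N * (\<delta> * N)"
    using bounds(1)[of N] bounds(2)[of "-N"] by (simp add: power2_eq_square algebra_simps)
  show ?thesis
  proof (cases "u = 0")
    case False
    then have "N > 0" by (simp add: N_def)
    with upper lower have "p \<le> \<delta> * N" "- p \<le> \<delta> * N"
      by (simp_all only: mult_le_cancel_left_pos)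
    then show ?thesis by (simp add: N_def p_def)
  qed simp
qed

lemma rip_lower_tight_imp_orthogonal:
  fixes A :: "real^'n^'m"
  assumes "rip A (Suc K) \<delta>" "sparse K u" "u $ i = 0"
    and "(norm (A *v u))\<^sup>2 \<le> (1 - \<delta>) * (norm u)\<^sup>2"
  shows "(A *v u) \<bullet> column i A = 0"
proof -
  have "sparse K (0 :: real^'n)"
    by (simp add: sparse_def supp_def)
  then have "(norm (column i A))\<^sup>2 \<le> 1 + \<delta>"
    using rip_add_axis(2)[OF assms(1), of 0 i 1] by simp
  then have column: "t\<^sup>2 * (norm (column i A))\<^sup>2 \<le> t\<^sup>2 * (1 + \<delta>)" for t
    by (simp add: mult_left_mono)
  have lower: "(1 - \<delta>) * ((norm u)\<^sup>2 + t\<^sup>2)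
      \<le> (1 - \<delta>) * (norm u)\<^sup>2 + 2 * t * ((A *v u) \<bullet> column i A) + t\<^sup>2 * (1 + \<delta>)" for t
    using rip_add_axis(1)[OF assms(1-3), of t] assms(4) column[of t] by linarith
  have "t * (- ((A *v u) \<bullet> column i A)) \<le> \<delta> * t\<^sup>2" for t
    using lower[of t] by (simp add: algebra_simps)
  then have "- ((A *v u) \<bullet> column i A) = 0"
    by (rule linear_le_square_imp_eq_0)
  then show ?thesis by simp
qed

lemma rip_max_correlation_off_support_imp_eq_0:
  fixes A :: "real^'n^'m"
  assumes rip: "rip A (Suc K) \<delta>" and delta: "\<delta> * (sqrt K + 1) = 1"
    and u: "sparse K u" "u $ i = 0"
    and max: "\<forall>j\<in>supp u. \<bar>(A *v u) \<bullet> column j A\<bar> \<le> \<bar>(A *v u) \<bullet> column i A\<bar>"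
  shows "A *v u = 0"
proof -
  have le: "(norm (A *v u))\<^sup>2 \<le> \<bar>(A *v u) \<bullet> column i A\<bar> * sqrt K * norm u"
    by (rule power2_norm_matrix_vector_le[OF u(1) max])
  also have "\<dots> \<le> \<delta> * norm u * sqrt K * norm u"
    using rip_column_correlation_le[OF rip u] by (simp add: mult_right_mono)
  also have "\<dots> = (\<delta> * sqrt K) * (norm u)\<^sup>2"
    by (simp add: power2_eq_square algebra_simps)
  also have "\<delta> * sqrt K = 1 - \<delta>"
    using delta by (simp add: algebra_simps)
  finally have "(A *v u) \<bullet> column i A = 0"
    by (rule rip_lower_tight_imp_orthogonal[OF rip u])
  then show ?thesis
    using le by simp
qed

section \<open>Least squares and OMP residuals\<close>

lemma ls_min_exists:
  fixes A :: "real^'n^'m"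
  shows "\<exists>z. ls_min A y T z"
proof -
  define W where "W = {w :: real^'n. \<forall>i. i \<notin> T \<longrightarrow> w $ i = 0}"
  have "subspace W"
    unfolding W_def subspace_def by auto
  then have "subspace ((*v) A ` W)"
    by (rule linear_subspace_image[OF matrix_vector_mul_linear])
  then have "closed ((*v) A ` W)" and "(*v) A ` W \<noteq> {}"
    using closed_subspace subspace_0 by blast+
  then obtain p where "p \<in> (*v) A ` W" and p: "\<And>q. q \<in> (*v) A ` W \<Longrightarrow> dist y p \<le> dist y q"
    using distance_attains_inf[where a = y] by blast
  then obtain z where "z \<in> W" "p = A *v z"
    by blast
  then have "ls_min A y T z"
    using p by (auto simp: ls_min_def W_def supp_def dist_norm)
  then show ?thesis ..
qed

lemma omp_residualE:
  fixes A :: "real^'n^'m"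
  obtains z where "ls_min A y T z" and "omp_residual A y T = y - A *v z"
  using someI_ex[OF ls_min_exists] that unfolding omp_residual_def by blast

lemma omp_residual_orthogonal:
  fixes A :: "real^'n^'m"
  assumes "j \<in> T"
  shows "omp_residual A y T \<bullet> column j A = 0"
proof -
  obtain z where z: "ls_min A y T z" and res: "omp_residual A y T = y - A *v z"
    by (rule omp_residualE)
  have "norm (y - A *v z) \<le> norm ((y - A *v z) + s *\<^sub>R column j A)" for s
  proof -
    have "supp (z + (- s) *\<^sub>R axis j 1) \<subseteq> T"
      using supp_add_axis[of z "- s" j] z assms unfolding ls_min_def by blast
    then have "norm (y - A *v z) \<le> norm (y - A *v (z + (- s) *\<^sub>R axis j 1))"
      using z unfolding ls_min_def by blast
    also have "y - A *v (z + (- s) *\<^sub>R axis j 1) = (y - A *v z) + s *\<^sub>R column j A"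
      unfolding matrix_vector_add_axis by simp
    finally show ?thesis .
  qed
  then show ?thesis
    unfolding res by (rule inner_eq_0_if_norm_le_norm_add_scaleR)
qed

lemma matrix_vector_eq_if_ls_min:
  fixes A :: "real^'n^'m"
  assumes "ls_min A (A *v x) T z" and "supp x \<subseteq> T"
  shows "A *v z = A *v x"
proof -
  have "norm (A *v x - A *v z) \<le> norm (A *v x - A *v x)"
    using assms unfolding ls_min_def by blast
  then show ?thesis by simp
qed

lemma omp_residual_eq_0_if_supp_subset:
  fixes A :: "real^'n^'m"
  assumes "supp x \<subseteq> T"
  shows "omp_residual A (A *v x) T = 0"
proof -
  obtain z where z: "ls_min A (A *v x) T z" and res: "omp_residual A (A *v x) T = A *v x - A *v z"
    by (rule omp_residualE)
  have "A *v z = A *v x"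
    by (rule matrix_vector_eq_if_ls_min[OF z assms])
  then show ?thesis
    using res by simp
qed

lemma supp_subset_if_omp_residual_eq_0:
  fixes A :: "real^'n^'m"
  assumes "rip A k \<delta>" "\<delta> < 1" "card (supp x \<union> T) \<le> k" "omp_residual A (A *v x) T = 0"
  shows "supp x \<subseteq> T"
proof -
  obtain z where z: "ls_min A (A *v x) T z" and "omp_residual A (A *v x) T = A *v x - A *v z"
    by (rule omp_residualE)
  then have "A *v x = A *v z"
    using assms(4) by simp
  moreover have "supp x \<union> supp z \<subseteq> supp x \<union> T"
    using z unfolding ls_min_def by blast
  ultimately have "x = z"
    using rip_matrix_vector_inj[OF assms(1,2) _ assms(3)] by blast
  then show ?thesis
    using z unfolding ls_min_def by blast
qed

lemma ls_min_eq_if_supp_subset: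
  fixes A :: "real^'n^'m"
  assumes "rip A k \<delta>" "\<delta> < 1" "supp x \<subseteq> T" "card T \<le> k" "ls_min A (A *v x) T z"
  shows "z = x"
proof -
  have "supp z \<union> supp x \<subseteq> T"
    using assms(3,5) unfolding ls_min_def by blast
  then show ?thesis
    using rip_matrix_vector_inj[OF assms(1,2) _ assms(4)] matrix_vector_eq_if_ls_min[OF assms(5,3)]
    by blast
qed

lemma omp_selection_in_support:
  fixes A :: "real^'n^'m"
  assumes rip: "rip A (Suc K) \<delta>" and delta: "\<delta> * (sqrt K + 1) = 1"
    and x: "sparse K x" and T: "T \<subseteq> supp x"
    and nonzero: "omp_residual A (A *v x) T \<noteq> 0"
    and max: "\<forall>j. \<bar>omp_residual A (A *v x) T \<bullet> column j A\<bar>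
                  \<le> \<bar>omp_residual A (A *v x) T \<bullet> column i A\<bar>"
  shows "i \<in> supp x - T"
proof -
  obtain z where z: "ls_min A (A *v x) T z" and res: "omp_residual A (A *v x) T = A *v x - A *v z"
    by (rule omp_residualE)
  define u where "u = x - z"
  have Au: "omp_residual A (A *v x) T = A *v u"
    by (simp add: res u_def matrix_vector_mult_diff_distrib)
  have supp_u: "supp u \<subseteq> supp x"
    using supp_diff[of x z] z T unfolding u_def ls_min_def by blast
  then have u: "sparse K u"
    using x unfolding sparse_def by (meson card_mono finite order_trans)
  have "i \<notin> T"
  proof
    assume "i \<in> T"
    then have "omp_residual A (A *v x) T \<bullet> column i A = 0"
      by (rule omp_residual_orthogonal)
    then have "(A *v u) \<bullet> column j A = 0" for j
      using max unfolding Au by (metis abs_le_zero_iff abs_zero)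
    then show False
      using nonzero Au matrix_vector_eq_0_if_orthogonal_columns by metis
  qed
  moreover have "i \<in> supp x"
  proof (rule ccontr)
    assume "i \<notin> supp x"
    then have "u $ i = 0"
      using supp_u unfolding supp_def by blast
    then have "A *v u = 0"
      using rip_max_correlation_off_support_imp_eq_0[OF rip delta u] max unfolding Au by blast
    then show False
      using nonzero Au by simp
  qed
  ultimately show ?thesis by blast
qed

section \<open>Exact recovery\<close>

context
  fixes A :: "real^'n^'m" and K :: nat and \<delta> :: real and x :: "real^'n" and t :: "nat \<Rightarrow> 'n"
  assumes rip: "rip A (Suc K) \<delta>" and delta: "\<delta> * (sqrt K + 1) = 1" and delta_less_1: "\<delta> < 1"
    and x: "sparse K x" and run: "omp_run A (A *v x) K t"
begin

lemma omp_run_max_correlation: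
  assumes "k < K"
  shows "\<bar>omp_residual A (A *v x) (t ` {1..k}) \<bullet> column j A\<bar>
           \<le> \<bar>omp_residual A (A *v x) (t ` {1..k}) \<bullet> column (t (Suc k)) A\<bar>"
proof -
  have k: "Suc k \<in> {1..K}"
    using assms by simp
  show ?thesis
    using run[unfolded omp_run_def, rule_format, OF k, of j]
    by (simp add: atLeastLessThanSuc_atLeastAtMost)
qed

lemma omp_support_invariant:
  "k \<le> K \<Longrightarrow> supp x \<subseteq> t ` {1..k} \<or> (t ` {1..k} \<subseteq> supp x \<and> card (t ` {1..k}) = k)"
proof (induction k)
  case (Suc k)
  define T where "T = t ` {1..k}"
  have selected: "t ` {1..Suc k} = insert (t (Suc k)) T"
    unfolding T_def by (auto simp: atLeastAtMostSuc_conv)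
  have "supp x \<subseteq> T \<or> (T \<subseteq> supp x \<and> card T = k)"
    using Suc by (simp add: T_def)
  then consider "supp x \<subseteq> T" | "T \<subseteq> supp x" "card T = k"
    by blast
  then show ?case
  proof cases
    case 1
    then show ?thesis using selected by blast
  next
    case 2
    show ?thesis
    proof (cases "omp_residual A (A *v x) T = 0")
      case True
      have "card (supp x \<union> T) \<le> Suc K"
        using 2 x by (simp add: sparse_def Un_absorb2)
      then have "supp x \<subseteq> T"
        by (rule supp_subset_if_omp_residual_eq_0[OF rip delta_less_1 _ True])
      then show ?thesis using selected by blast
    next
      case False
      have "t (Suc k) \<in> supp x - T"
        using omp_selection_in_support[OF rip delta x 2(1) False] omp_run_max_correlation Suc.prems
        unfolding T_def by simp
      then show ?thesis
        using 2 selected by (simp add: card_insert_if finite_subset)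
    qed
  qed
qed simp

lemma omp_selects_support:
  assumes "k \<in> {1..K}" and "omp_residual A (A *v x) (t ` {1..<k}) \<noteq> 0"
  shows "t k \<in> supp x"
proof -
  obtain l where k: "k = Suc l" and "l < K"
    using assms(1) by (cases k) auto
  define T where "T = t ` {1..l}"
  have nonzero: "omp_residual A (A *v x) T \<noteq> 0"
    using assms(2) unfolding k T_def by (simp add: atLeastLessThanSuc_atLeastAtMost)
  moreover have "supp x \<subseteq> T \<or> T \<subseteq> supp x"
    using omp_support_invariant[of l] \<open>l < K\<close> by (auto simp: T_def)
  ultimately have "T \<subseteq> supp x"
    using omp_residual_eq_0_if_supp_subset by blast
  then show ?thesis
    using omp_selection_in_support[OF rip delta x _ nonzero] omp_run_max_correlation[OF \<open>l < K\<close>]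
    unfolding k T_def by blast
qed

lemma omp_recovers:
  assumes "ls_min A (A *v x) (t ` {1..K}) z"
  shows "z = x"
proof -
  have card: "card (t ` {1..K}) \<le> K"
    using card_image_le[of "{1..K}" t] by simp
  have "supp x \<subseteq> t ` {1..K}"
    using omp_support_invariant[of K] card_seteq[of "supp x" "t ` {1..K}"] x
    unfolding sparse_def by auto
  then show ?thesis
    using ls_min_eq_if_supp_subset[OF rip delta_less_1 _ _ assms] card by simp
qed

end

theorem theorem2:
  fixes A :: "real^'n^'m" and K :: nat and x :: "real^'n" and t :: "nat \<Rightarrow> 'n"
  assumes "K \<ge> 1"
    and "K + 1 \<le> CARD('n)"
    and "RIC A (K + 1) = 1 / (sqrt (real K) + 1)"
    and "sparse K x"
    and "omp_run A (A *v x) K t"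
  shows "(\<forall>k \<in> {1..K}. omp_residual A (A *v x) (t ` {1..<k}) \<noteq> 0 \<longrightarrow> t k \<in> supp x)
       \<and> (\<forall>z. ls_min A (A *v x) (t ` {1..K}) z \<longrightarrow> z = x)"
proof -
  define \<delta> where "\<delta> = RIC A (Suc K)"
  have rip: "rip A (Suc K) \<delta>"
    unfolding \<delta>_def by (rule rip_RIC)
  define s where "s = sqrt K + 1"
  have "1 < s"
    using assms(1) by (simp add: s_def)
  moreover have "\<delta> = 1 / s"
    using assms(3) by (simp add: \<delta>_def s_def)
  ultimately have "\<delta> * s = 1" and "\<delta> < 1"
    by simp_all
  note delta = \<open>\<delta> * s = 1\<close>[unfolded s_def]
  show ?thesis
    using omp_selects_support[OF rip delta \<open>\<delta> < 1\<close> assms(4,5)]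
      omp_recovers[OF rip delta \<open>\<delta> < 1\<close> assms(4,5)] by blast
qed

end
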